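(* Let $F$ be a field, $U,V$ finite-dimensional $F$-vector spaces of dimensions $n$ and $m$, and $A:U\times U\to V$ an alternating bilinear map whose image spans $V$. If $m>2$ and $n>m+1$, then there exists a basis $\{u_1,\dots,u_n\}$ of $U$, ordered $u_1<\dots<u_n$, such that the associated set $\mathcal{B}$ (constructed as in the context) is either not a tree of height one, or else satisfies all of the following: (1) $\mathcal{B}=\{\{1,2\},\{1,3\},\dots,\{1,m+1\}\}$; (2) $A(u_1,u_i)=0$ for all $i$ with $m+2\le i\le n$; (3) $A(u_i,u_j)=0$ for all $i,j$ with $m+1<i<j\le n$; (4) $A(u_i,u_j)\in\operatorname{span}\{A(u_1,u_i)\}$ for all $i,j$ with $2\le i\le m+1<j\le n$.
   Context: Given a basis $u_1<\dots<u_n$ of $U$: $\mathcal{Y}$ is the set of $2$-element subsets of $\{1,\dots,n\}$, totally ordered by $\{i,j\}<\{r,s\}$ iff $\max\{i,j\}<\max\{r,s\}$, or the maxima are equal to $a$ and the remaining element of $\{i,j\}\setminus\{a\}$ is smaller than that of $\{r,s\}\setminus\{a\}$. Starting from $\mathcal{B}_0=\emptyset,B_0=\emptyset$, inductively let $\{i,j\}$ ($i<j$) be the least element of $\mathcal{Y}$ with $A(u_i,u_j)\notin\operatorname{span}(B_k)$ and set $\mathcal{B}_{k+1}=\mathcal{B}_k\cup\{\{i,j\}\}$, $B_{k+1}=B_k\cup\{A(u_i,u_j)\}$; stop at $k=m$ and put $\mathcal{B}=\mathcal{B}_m$. The set $\mathcal{B}$ is a tree of height one if there is an $i\in\{1,\dots,n\}$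 with $i\in\{j,l\}$ for every $\{j,l\}\in\mathcal{B}$. *)

theory Defs
  imports Main "HOL.Vector_Spaces"
begin

text \<open>Pairs \<open>{i,j}\<close> with \<open>i < j\<close> are represented as \<open>(i,j)\<close>.  The set \<open>\<Y>\<close>:\<close>
definition Ypairs :: "nat \<Rightarrow> (nat \<times> nat) set" where
  "Ypairs n = {(i, j). 1 \<le> i \<and> i < j \<and> j \<le> n}"

definition ylt :: "nat \<times> nat \<Rightarrow> nat \<times> nat \<Rightarrow> bool" where
  "ylt p q \<longleftrightarrow> snd p < snd q \<or> (snd p = snd q \<and> fst p < fst q)"

definition candidates ::
  "('f::field \<Rightarrow> 'v::ab_group_add \<Rightarrow> 'v) \<Rightarrow> ('u \<Rightarrow> 'u \<Rightarrow> 'v) \<Rightarrow> (nat \<Rightarrow> 'u) \<Rightarrow> nat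
     \<Rightarrow> (nat \<times> nat) set \<Rightarrow> (nat \<times> nat) set" where
  "candidates sV A u n Bs =
     {p \<in> Ypairs n. A (u (fst p)) (u (snd p))
        \<notin> module.span sV ((\<lambda>q. A (u (fst q)) (u (snd q))) ` Bs)}"

definition greedy_step ::
  "('f::field \<Rightarrow> 'v::ab_group_add \<Rightarrow> 'v) \<Rightarrow> ('u \<Rightarrow> 'u \<Rightarrow> 'v) \<Rightarrow> (nat \<Rightarrow> 'u) \<Rightarrow> nat
     \<Rightarrow> (nat \<times> nat) set \<Rightarrow> (nat \<times> nat) set" where
  "greedy_step sV A u n Bs =
     (let C = candidates sV A u n Bs in
      if C = {} then Bs
      else Bs \<union> {THE p. p \<in> C \<and> (\<forall>q\<in>C. q \<noteq> p \<longrightarrow> ylt p q)})"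

text \<open>The set \<open>\<B>\<close>: each productive step adds a new pair of \<open>\<Y>\<close>, so after
  \<open>card \<Y>\<close> iterations the construction has stopped (further steps are the identity).\<close>
definition greedy_B ::
  "('f::field \<Rightarrow> 'v::ab_group_add \<Rightarrow> 'v) \<Rightarrow> ('u \<Rightarrow> 'u \<Rightarrow> 'v) \<Rightarrow> (nat \<Rightarrow> 'u) \<Rightarrow> nat
     \<Rightarrow> (nat \<times> nat) set" where
  "greedy_B sV A u n = (greedy_step sV A u n ^^ card (Ypairs n)) {}"

definition tree_height_one :: "nat \<Rightarrow> (nat \<times> nat) set \<Rightarrow> bool" where
  "tree_height_one n Bs \<longleftrightarrow> (\<exists>i\<in>{1..n}. \<forall>p\<in>Bs. i = fst p \<or> i = snd p)"

end

theory Submission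
  imports Defs
begin

(* Call A triangle-free if A(x,y), A(x,z), A(y,z) are never linearly independent.
   Both cases rest on the fact that the greedy set is the set of pivots: the pairs whose
   value is not in the span of the values on all earlier pairs.

   If A is not triangle-free, the witnesses x, y, z are independent; in a basis starting
   with x, y, z the pairs {1,2}, {1,3}, {2,3} are all pivots, so no index meets every pair.

   If A is triangle-free and dim V >= 3, some slice A(x,-) maps onto V, and every k with
   A(x,k) = 0 has A(k,-) proportional to A(x,-).  Hence U is spanned by x, preimages
   w_1, ..., w_m of a basis of V under A(x,-), and the radical of A.  In a basis
   x, w_1, ..., w_m, r_1, r_2, ... the pivots are exactly the pairs {1,k} with k <= m+1,
   and every pair involving a radical vector has value 0. *)

section \<open>Linear independence of two and three vectors\<close>

context vector_space
begin

definition independent2 :: "'b \<Rightarrow> 'b \<Rightarrow> bool" where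
  "independent2 a b \<longleftrightarrow> (\<forall>c d. c *s a + d *s b = 0 \<longrightarrow> c = 0 \<and> d = 0)"

definition independent3 :: "'b \<Rightarrow> 'b \<Rightarrow> 'b \<Rightarrow> bool" where
  "independent3 a b w \<longleftrightarrow> (\<forall>c d e. c *s a + d *s b + e *s w = 0 \<longrightarrow> c = 0 \<and> d = 0 \<and> e = 0)"

lemma independent2_commute: "independent2 a b \<Longrightarrow> independent2 b a"
  unfolding independent2_def by (metis add.commute)

lemma independent2_nonzero: "independent2 a b \<Longrightarrow> a \<noteq> 0"
  unfolding independent2_def by (metis add_0 one_neq_zero scale_zero_left scale_zero_right)

lemma independent2_scale: "independent2 a b \<Longrightarrow> k \<noteq> 0 \<Longrightarrow> independent2 (k *s a) b"
  unfolding independent2_def by (metis mult_eq_0_iff scale_scale)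

lemma independent2_add_multiple: "independent2 a b \<Longrightarrow> independent2 (k *s a + b) a"
  unfolding independent2_def
proof (intro allI impI)
  fix c d
  assume "\<forall>c d. c *s a + d *s b = 0 \<longrightarrow> c = 0 \<and> d = 0" and "c *s (k *s a + b) + d *s a = 0"
  moreover have "c *s (k *s a + b) + d *s a = (c * k + d) *s a + c *s b"
    by (simp add: scale_right_distrib scale_left_distrib algebra_simps)
  ultimately have "c = 0" "c * k + d = 0"
    by metis+
  then show "c = 0 \<and> d = 0"
    by simp
qed

lemma independent2_not_in_span: "independent2 a b \<Longrightarrow> b \<notin> span {a}"
proof
  assume ind: "independent2 a b" and "b \<in> span {a}"
  then obtain k where "b = k *s a"
    by (auto simp: span_singleton)
  then have "k *s a + (- 1) *s b = 0"
    by simp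
  then show False
    using ind unfolding independent2_def by fastforce
qed

lemma dependent2_multiple:
  assumes "\<not> independent2 b a" and "a \<noteq> 0"
  shows "\<exists>k. b = k *s a"
proof -
  obtain c d where cd: "c *s b + d *s a = 0" "c \<noteq> 0 \<or> d \<noteq> 0"
    using assms(1) unfolding independent2_def by blast
  with assms(2) have "c \<noteq> 0"
    by auto
  have "b = inverse c *s (c *s b)"
    using \<open>c \<noteq> 0\<close> by simp
  also have "c *s b = - (d *s a)"
    using cd(1) by (simp add: add_eq_0_iff2)
  finally have "b = (- inverse c * d) *s a"
    by simp
  then show ?thesis ..
qed

lemma dependent3_combination:
  assumes "independent2 a b" and "\<not> independent3 a b w"
  shows "\<exists>s t. w = s *s a + t *s b"
proof -
  obtain c d e where cde: "c *s a + d *s b + e *s w = 0" "c \<noteq> 0 \<or> d \<noteq> 0 \<or> e \<noteq> 0"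
    using assms(2) unfolding independent3_def by blast
  have "e \<noteq> 0"
    using assms(1) cde unfolding independent2_def by auto
  have "w = inverse e *s (e *s w)"
    using \<open>e \<noteq> 0\<close> by simp
  also have "e *s w = - (c *s a + d *s b)"
    using cde(1) by (simp add: add_eq_0_iff2 add.commute)
  finally have "w = (- inverse e * c) *s a + (- inverse e * d) *s b"
    by (simp add: scale_right_distrib scale_right_diff_distrib)
  then show ?thesis
    by blast
qed

lemma independent3_imp_independent2: "independent3 a b w \<Longrightarrow> independent2 a b"
  unfolding independent3_def independent2_def by (metis add_0_right scale_zero_left)

lemma independent3_swap12: "independent3 a b w \<Longrightarrow> independent3 b a w"
  unfolding independent3_def by (metis add.commute)

lemma independent3_swap23: "independent3 a b w \<Longrightarrow> independent3 a w b"
  unfolding independent3_def by (metis add.assoc add.commute)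

lemma independent3_not_in_span: "independent3 a b w \<Longrightarrow> w \<notin> span {a, b}"
proof
  assume ind: "independent3 a b w" and "w \<in> span {a, b}"
  then obtain k where "w - k *s a \<in> span {b}"
    using span_breakdown_eq by blast
  then obtain l where "w - k *s a = l *s b"
    by (auto simp: span_singleton)
  then have "k *s a + l *s b + (- 1) *s w = 0"
    by (simp add: algebra_simps)
  then show False
    using ind unfolding independent3_def by fastforce
qed

lemma independent_imp_independent2:
  assumes "independent S" "a \<in> S" "b \<in> S" "a \<noteq> b"
  shows "independent2 a b"
  unfolding independent2_def
proof (intro allI impI)
  fix c d
  assume sum0: "c *s a + d *s b = 0"
  define f where "f v = (if v = a then c else d)" for v
  from sum0 have "(\<Sum>v\<in>{a, b}. f v *s v) = 0"
    using assms(4) by (simp add: f_def)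
  moreover have "{a, b} \<subseteq> S"
    using assms(2,3) by blast
  ultimately have "f a = 0" "f b = 0"
    using independentD[OF assms(1), of "{a, b}" f] by blast+
  then show "c = 0 \<and> d = 0"
    using assms(4) by (simp add: f_def)
qed

lemma independent_imp_independent3:
  assumes "independent S" "a \<in> S" "b \<in> S" "w \<in> S" "a \<noteq> b" "a \<noteq> w" "b \<noteq> w"
  shows "independent3 a b w"
  unfolding independent3_def
proof (intro allI impI)
  fix c d e
  assume sum0: "c *s a + d *s b + e *s w = 0"
  define f where "f v = (if v = a then c else if v = b then d else e)" for v
  from sum0 have "(\<Sum>v\<in>{a, b, w}. f v *s v) = 0"
    using assms(5-7) by (simp add: f_def add.assoc)
  moreover have "{a, b, w} \<subseteq> S"
    using assms(2-4) by blast
  ultimately have "f a = 0" "f b = 0" "f w = 0"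
    using independentD[OF assms(1), of "{a, b, w}" f] by blast+
  then show "c = 0 \<and> d = 0 \<and> e = 0"
    using assms(5-7) by (simp add: f_def)
qed

lemma span_singleton_neq_UNIV: "2 \<le> dim (UNIV :: 'b set) \<Longrightarrow> span {a} \<noteq> UNIV"
  using dim_le_card[of UNIV "{a}"] by auto

lemma finite_basis_if_dim_pos:
  assumes "independent B" "span B = UNIV" "0 < dim (UNIV :: 'b set)"
  shows "finite B" "card B = dim (UNIV :: 'b set)"
proof -
  show "card B = dim (UNIV :: 'b set)"
    using basis_card_eq_dim[of B UNIV] assms(1,2) by simp
  then show "finite B"
    using assms(3) card_ge_0_finite by force
qed

lemma exists_independent3:
  assumes "3 \<le> dim (UNIV :: 'b set)" "a \<noteq> 0"
  shows "\<exists>b w. independent3 a b w"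
proof -
  obtain B where B: "{a} \<subseteq> B" "independent B" "UNIV \<subseteq> span B"
    by (rule maximal_independent_subset_extend[of "{a}" UNIV]) (use assms(2) in auto)
  then have "span B = UNIV"
    by auto
  then have "finite B" "card B \<ge> 3"
    using finite_basis_if_dim_pos[OF B(2)] assms(1) by auto
  then have "\<not> card (B - {a}) \<le> Suc 0"
    using B(1) by simp
  then obtain b w where "b \<in> B - {a}" "w \<in> B - {a}" "b \<noteq> w"
    using card_le_Suc0_iff_eq[of "B - {a}"] \<open>finite B\<close> by blast
  then show ?thesis
    using independent_imp_independent3[OF B(2)] B(1) by blast
qed

lemma zero_if_dependent2_on_both:
  assumes ab: "independent2 a b" and "\<not> independent2 c a" "\<not> independent2 c b"
  shows "c = 0"
proof -
  obtain k0 k1 where "c = k0 *s a" "c = k1 *s b"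
    using dependent2_multiple assms(2,3) independent2_nonzero[OF ab]
      independent2_nonzero[OF independent2_commute[OF ab]] by metis
  then have "k0 *s a + (- k1) *s b = 0"
    by simp
  then have "k0 = 0"
    using ab unfolding independent2_def by blast
  then show ?thesis
    using \<open>c = k0 *s a\<close> by simp
qed

definition ordered_basis :: "nat \<Rightarrow> (nat \<Rightarrow> 'b) \<Rightarrow> bool" where
  "ordered_basis n u \<longleftrightarrow> inj_on u {1..n} \<and> independent (u ` {1..n}) \<and> span (u ` {1..n}) = UNIV"

lemma ordered_basis_if_bij_betw:
  "bij_betw u {1..n} B \<Longrightarrow> independent B \<Longrightarrow> span B = UNIV \<Longrightarrow> ordered_basis n u"
  by (simp add: ordered_basis_def bij_betw_def)

end

section \<open>The greedy construction and its pivots\<close>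

lemma wf_ylt: "wf {(p, q). ylt p q}"
proof -
  have "{(p, q). ylt p q} = inv_image (less_than <*lex*> less_than) (\<lambda>p. (snd p, fst p))"
    by (auto simp: ylt_def)
  then show ?thesis
    by (simp add: wf_lex_prod)
qed

lemma ylt_trans: "ylt p q \<Longrightarrow> ylt q r \<Longrightarrow> ylt p r"
  by (auto simp: ylt_def)

lemma ylt_asym: "ylt p q \<Longrightarrow> \<not> ylt q p"
  by (auto simp: ylt_def)

lemma ylt_linear: "p \<noteq> q \<Longrightarrow> ylt p q \<or> ylt q p"
  by (cases p; cases q) (auto simp: ylt_def)

lemma ex_ylt_minimal:
  assumes "x \<in> Q"
  shows "\<exists>g\<in>Q. \<forall>q. ylt q g \<longrightarrow> q \<notin> Q"
proof -
  obtain g where "g \<in> Q" "\<And>q. (q, g) \<in> {(p, q). ylt p q} \<Longrightarrow> q \<notin> Q"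
    using wfE_min[OF wf_ylt assms] by metis
  then show ?thesis
    by blast
qed

lemma finite_Ypairs: "finite (Ypairs n)"
  by (rule finite_subset[of _ "{0..n} \<times> {0..n}"]) (auto simp: Ypairs_def)

definition pair_value :: "('u \<Rightarrow> 'u \<Rightarrow> 'v) \<Rightarrow> (nat \<Rightarrow> 'u) \<Rightarrow> nat \<times> nat \<Rightarrow> 'v" where
  "pair_value A u p = A (u (fst p)) (u (snd p))"

definition Ypairs_below :: "nat \<Rightarrow> nat \<times> nat \<Rightarrow> (nat \<times> nat) set" where
  "Ypairs_below n p = {q \<in> Ypairs n. ylt q p}"

definition Ydown_closed :: "nat \<Rightarrow> (nat \<times> nat) set \<Rightarrow> bool" where
  "Ydown_closed n D \<longleftrightarrow> D \<subseteq> Ypairs n \<and> (\<forall>p\<in>D. Ypairs_below n p \<subseteq> D)"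

lemma Ydown_closed_Ypairs_below: "Ydown_closed n (Ypairs_below n p)"
  by (auto simp: Ydown_closed_def Ypairs_below_def intro: ylt_trans)

lemma Ydown_closed_insert:
  "Ydown_closed n D \<Longrightarrow> g \<in> Ypairs n \<Longrightarrow> Ydown_closed n (D \<union> insert g (Ypairs_below n g))"
  by (auto simp: Ydown_closed_def Ypairs_below_def intro: ylt_trans)

lemma greedy_step_insert_least:
  assumes "g \<in> candidates sV A u n S"
    and "\<And>q. q \<in> candidates sV A u n S \<Longrightarrow> q \<noteq> g \<Longrightarrow> ylt g q"
  shows "greedy_step sV A u n S = insert g S"
proof -
  let ?C = "candidates sV A u n S"
  have "(THE p. p \<in> ?C \<and> (\<forall>q\<in>?C. q \<noteq> p \<longrightarrow> ylt p q)) = g"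
  proof (rule the_equality)
    fix p
    assume "p \<in> ?C \<and> (\<forall>q\<in>?C. q \<noteq> p \<longrightarrow> ylt p q)"
    then have "p \<noteq> g \<Longrightarrow> ylt p g \<and> ylt g p"
      using assms by auto
    then show "p = g"
      using ylt_asym by blast
  qed (use assms in blast)
  then show ?thesis
    using assms(1) by (auto simp: greedy_step_def Let_def)
qed

context vector_space
begin

definition pivots :: "('u \<Rightarrow> 'u \<Rightarrow> 'b) \<Rightarrow> (nat \<Rightarrow> 'u) \<Rightarrow> nat \<Rightarrow> (nat \<times> nat) set" where
  "pivots A u n = {p \<in> Ypairs n. pair_value A u p \<notin> span (pair_value A u ` Ypairs_below n p)}"

lemma candidates_eq:
  "candidates scale A u n S = {p \<in> Ypairs n. pair_value A u p \<notin> span (pair_value A u ` S)}"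
  by (simp add: candidates_def pair_value_def image_def)

lemma pair_value_in_span_pivots:
  assumes "Ydown_closed n D" and "p \<in> D"
  shows "pair_value A u p \<in> span (pair_value A u ` (pivots A u n \<inter> D))"
  using assms(2)
proof (induction p rule: wf_induct_rule[OF wf_ylt])
  case (1 p)
  show ?case
  proof (cases "p \<in> pivots A u n")
    case True
    then show ?thesis
      using 1 by (intro span_base) auto
  next
    case False
    then have "pair_value A u p \<in> span (pair_value A u ` Ypairs_below n p)"
      using 1 assms(1) by (auto simp: pivots_def Ydown_closed_def)
    also have "\<dots> \<subseteq> span (pair_value A u ` (pivots A u n \<inter> D))"
    proof (intro span_minimal subspace_span image_subsetI)
      fix q
      assume q: "q \<in> Ypairs_below n p"
      then have "q \<in> D"
        using 1(2) assms(1) by (auto simp: Ydown_closed_def)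
      then show "pair_value A u q \<in> span (pair_value A u ` (pivots A u n \<inter> D))"
        using q by (intro 1(1)) (simp_all add: Ypairs_below_def)
    qed
    finally show ?thesis .
  qed
qed

lemma candidate_not_below_pivots:
  assumes D: "Ydown_closed n D" and p: "p \<in> candidates scale A u n (pivots A u n \<inter> D)"
  shows "\<exists>q \<in> pivots A u n - D. q = p \<or> ylt q p"
proof (rule ccontr)
  assume none: "\<not> ?thesis"
  have pY: "p \<in> Ypairs n"
    and p_new: "pair_value A u p \<notin> span (pair_value A u ` (pivots A u n \<inter> D))"
    using p by (auto simp: candidates_eq)
  have "p \<notin> D"
    using p_new pair_value_in_span_pivots[OF D] by blast
  then have "p \<notin> pivots A u n"
    using none by blast
  then have "pair_value A u p \<in> span (pair_value A u ` Ypairs_below n p)"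
    using pY by (simp add: pivots_def)
  also have "\<dots> \<subseteq> span (pair_value A u ` (pivots A u n \<inter> Ypairs_below n p))"
    using pair_value_in_span_pivots[OF Ydown_closed_Ypairs_below, of _ n p A u]
    by (intro span_minimal subspace_span image_subsetI)
  also have "\<dots> \<subseteq> span (pair_value A u ` (pivots A u n \<inter> D))"
    using none by (intro span_mono) (auto simp: Ypairs_below_def)
  finally show False
    using p_new by blast
qed

lemma greedy_step_pivots_Int:
  assumes D: "Ydown_closed n D"
  shows "pivots A u n \<subseteq> D \<Longrightarrow>
      greedy_step scale A u n (pivots A u n \<inter> D) = pivots A u n \<inter> D"
    and "g \<in> pivots A u n - D \<Longrightarrow> (\<And>q. q \<in> pivots A u n - D \<Longrightarrow> \<not> ylt q g) \<Longrightarrow>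
      greedy_step scale A u n (pivots A u n \<inter> D) = insert g (pivots A u n \<inter> D)"
proof -
  let ?C = "candidates scale A u n (pivots A u n \<inter> D)"
  show "greedy_step scale A u n (pivots A u n \<inter> D) = pivots A u n \<inter> D"
    if "pivots A u n \<subseteq> D"
  proof -
    have "candidates scale A u n (pivots A u n \<inter> D) = {}"
      using that candidate_not_below_pivots[OF D] by blast
    then show ?thesis
      by (simp add: greedy_step_def)
  qed
  assume g: "g \<in> pivots A u n - D" and least: "\<And>q. q \<in> pivots A u n - D \<Longrightarrow> \<not> ylt q g"
  have "pivots A u n \<inter> D \<subseteq> Ypairs_below n g"
  proof
    fix p
    assume p: "p \<in> pivots A u n \<inter> D"
    have "\<not> ylt g p"
      using p g D by (auto simp: Ydown_closed_def Ypairs_below_def pivots_def)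
    then show "p \<in> Ypairs_below n g"
      using p g D ylt_linear[of p g] by (auto simp: Ydown_closed_def Ypairs_below_def)
  qed
  then have "span (pair_value A u ` (pivots A u n \<inter> D))
      \<subseteq> span (pair_value A u ` Ypairs_below n g)"
    by (intro span_mono image_mono)
  then have "g \<in> ?C"
    using g by (auto simp: candidates_eq pivots_def)
  moreover have "ylt g p" if p: "p \<in> ?C" and pg: "p \<noteq> g" for p
  proof -
    obtain q where q: "q \<in> pivots A u n - D" "q = p \<or> ylt q p"
      using candidate_not_below_pivots[OF D p] by blast
    have "q = g \<or> ylt g q"
      using least[OF q(1)] ylt_linear by blast
    then show ?thesis
      using q(2) pg ylt_trans by blast
  qed
  ultimately show "greedy_step scale A u n (pivots A u n \<inter> D) = insert g (pivots A u n \<inter> D)"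
    by (rule greedy_step_insert_least)
qed

lemma greedy_iterate_pivots:
  "\<exists>D. Ydown_closed n D \<and> (greedy_step scale A u n ^^ k) {} = pivots A u n \<inter> D \<and>
     ((greedy_step scale A u n ^^ k) {} = pivots A u n \<or>
      card ((greedy_step scale A u n ^^ k) {}) = k)"
proof (induction k)
  case 0
  show ?case
    by (intro exI[of _ "{}"]) (simp add: Ydown_closed_def)
next
  case (Suc k)
  let ?S = "(greedy_step scale A u n ^^ k) {}"
  from Suc obtain D where D: "Ydown_closed n D" and S: "?S = pivots A u n \<inter> D"
    and stopped_or_card: "?S = pivots A u n \<or> card ?S = k"
    by blast
  show ?case
  proof (cases "pivots A u n \<subseteq> D")
    case True
    then show ?thesis
      using greedy_step_pivots_Int(1)[OF D True] D S stopped_or_card by (intro exI[of _ D]) auto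
  next
    case False
    then obtain p where "p \<in> pivots A u n - D"
      by blast
    then obtain g where g: "g \<in> pivots A u n - D" and least: "\<forall>q. ylt q g \<longrightarrow> q \<notin> pivots A u n - D"
      using ex_ylt_minimal by blast
    let ?D' = "D \<union> insert g (Ypairs_below n g)"
    have step: "greedy_step scale A u n ?S = insert g ?S"
      unfolding S by (rule greedy_step_pivots_Int(2)[OF D g]) (use least in blast)
    have gY: "g \<in> Ypairs n"
      using g by (simp add: pivots_def)
    have "pivots A u n \<inter> Ypairs_below n g \<subseteq> D"
      unfolding Ypairs_below_def using least by blast
    then have "pivots A u n \<inter> ?D' = insert g ?S"
      using S g by blast
    moreover have "card (insert g ?S) = Suc k"
    proof -
      have "finite ?S"
        by (rule finite_subset[OF _ finite_Ypairs]) (use S in \<open>auto simp: pivots_def\<close>)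
      moreover have "?S \<noteq> pivots A u n" "g \<notin> ?S"
        using S g by auto
      ultimately show ?thesis
        using stopped_or_card by simp
    qed
    ultimately show ?thesis
      using step Ydown_closed_insert[OF D gY] by (intro exI[of _ ?D']) simp
  qed
qed

theorem greedy_B_eq_pivots: "greedy_B scale A u n = pivots A u n"
proof -
  obtain D where B: "greedy_B scale A u n = pivots A u n \<inter> D"
    and stopped_or_card: "greedy_B scale A u n = pivots A u n \<or>
      card (greedy_B scale A u n) = card (Ypairs n)"
    using greedy_iterate_pivots[where k = "card (Ypairs n)"] unfolding greedy_B_def by blast
  have pivots_Y: "pivots A u n \<subseteq> Ypairs n"
    by (auto simp: pivots_def)
  show ?thesis
  proof (rule ccontr)
    assume not_stopped: "greedy_B scale A u n \<noteq> pivots A u n"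
    have "greedy_B scale A u n \<subseteq> Ypairs n"
      using B pivots_Y by blast
    then have "greedy_B scale A u n = Ypairs n"
      using card_seteq[OF finite_Ypairs] stopped_or_card not_stopped by simp
    then show False
      using not_stopped B pivots_Y by blast
  qed
qed

end

lemma not_tree_height_one_if_triangle:
  assumes "{(a, b), (a, c), (b, c)} \<subseteq> Bs" and "a \<noteq> b" "a \<noteq> c" "b \<noteq> c"
  shows "\<not> tree_height_one n Bs"
proof
  assume "tree_height_one n Bs"
  then obtain i where "\<forall>p\<in>Bs. i = fst p \<or> i = snd p"
    unfolding tree_height_one_def by blast
  then have "i = a \<or> i = b" "i = a \<or> i = c" "i = b \<or> i = c"
    using assms(1) by auto
  then show False
    using assms(2-4) by auto
qed

context vector_space
begin

lemma triangle_pivots: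
  assumes "3 \<le> n" and tri: "independent3 (A (u 1) (u 2)) (A (u 1) (u 3)) (A (u 2) (u 3))"
  shows "{(1, 2), (1, 3), (2, 3)} \<subseteq> pivots A u n"
proof -
  have below: "Ypairs_below n (1, 2) = {}" "Ypairs_below n (1, 3) = {(1, 2)}"
    "Ypairs_below n (2, 3) = {(1, 2), (1, 3)}"
    using assms(1) by (auto simp: Ypairs_below_def Ypairs_def ylt_def)
  have "A (u 1) (u 2) \<noteq> 0"
    using independent2_nonzero[OF independent3_imp_independent2[OF tri]] .
  moreover have "A (u 1) (u 3) \<notin> span {A (u 1) (u 2)}"
    using independent2_not_in_span[OF independent3_imp_independent2[OF tri]] .
  moreover have "A (u 2) (u 3) \<notin> span {A (u 1) (u 2), A (u 1) (u 3)}"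
    using independent3_not_in_span[OF tri] .
  ultimately show ?thesis
    using assms(1) by (simp add: pivots_def below[simplified] pair_value_def Ypairs_def)
qed

lemma pivots_subset_star:
  assumes span: "span ((\<lambda>k. A (u 1) (u k)) ` {2..m + 1}) = UNIV"
    and comb: "\<And>i j. 2 \<le> i \<Longrightarrow> i < j \<Longrightarrow> j \<le> m + 1 \<Longrightarrow>
      A (u i) (u j) \<in> span {A (u 1) (u i), A (u 1) (u j)}"
  shows "pivots A u n \<subseteq> {(1, k) | k. 2 \<le> k \<and> k \<le> m + 1}"
proof
  fix p
  assume p: "p \<in> pivots A u n"
  obtain i j where ij: "p = (i, j)"
    by fastforce
  have Y: "1 \<le> i" "i < j" "j \<le> n"
    and new: "A (u i) (u j) \<notin> span (pair_value A u ` Ypairs_below n (i, j))"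
    using p by (auto simp: pivots_def ij Ypairs_def pair_value_def)
  have earlier: "A (u 1) (u k) \<in> span (pair_value A u ` Ypairs_below n (i, j))"
    if "2 \<le> k" "ylt (1, k) (i, j)" for k
    using that Y by (intro span_base image_eqI[of _ _ "(1, k)"])
      (auto simp: pair_value_def Ypairs_below_def Ypairs_def ylt_def)
  have "j \<le> m + 1"
  proof (rule ccontr)
    assume "\<not> j \<le> m + 1"
    then have "span ((\<lambda>k. A (u 1) (u k)) ` {2..m + 1})
        \<subseteq> span (pair_value A u ` Ypairs_below n (i, j))"
      using earlier by (intro span_minimal) (auto simp: ylt_def)
    then show False
      using new span by blast
  qed
  moreover have "i = 1"
  proof (rule ccontr)
    assume "i \<noteq> 1"
    then have "span {A (u 1) (u i), A (u 1) (u j)} \<subseteq> span (pair_value A u ` Ypairs_below n (i, j))"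
      using Y earlier by (intro span_minimal) (auto simp: ylt_def)
    then show False
      using comb[of i j] Y \<open>i \<noteq> 1\<close> \<open>j \<le> m + 1\<close> new by auto
  qed
  ultimately show "p \<in> {(1, k) | k. 2 \<le> k \<and> k \<le> m + 1}"
    using ij Y by auto
qed

lemma star_subset_pivots:
  assumes "m + 1 \<le> n"
    and inj: "inj_on (\<lambda>k. A (u 1) (u k)) {2..m + 1}"
    and ind: "independent ((\<lambda>k. A (u 1) (u k)) ` {2..m + 1})"
    and comb: "\<And>i j. 2 \<le> i \<Longrightarrow> i < j \<Longrightarrow> j \<le> m + 1 \<Longrightarrow>
      A (u i) (u j) \<in> span {A (u 1) (u i), A (u 1) (u j)}"
  shows "{(1, k) | k. 2 \<le> k \<and> k \<le> m + 1} \<subseteq> pivots A u n"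
proof
  fix p :: "nat \<times> nat"
  assume "p \<in> {(1, k) | k. 2 \<le> k \<and> k \<le> m + 1}"
  then obtain j where p: "p = (1, j)" and j: "2 \<le> j" "j \<le> m + 1"
    by blast
  let ?a = "\<lambda>k. A (u 1) (u k)"
  let ?B = "?a ` ({2..m + 1} - {j})"
  have "pair_value A u ` Ypairs_below n (1, j) \<subseteq> span ?B"
  proof
    fix e
    assume "e \<in> pair_value A u ` Ypairs_below n (1, j)"
    then obtain i l where e: "e = A (u i) (u l)" and il: "1 \<le> i" "i < l" "l < j"
      by (auto simp: Ypairs_below_def Ypairs_def ylt_def pair_value_def)
    have "?a l \<in> ?B"
      using il j by auto
    moreover have "?a i \<in> ?B" if "i \<noteq> 1"
      using il j that by auto
    ultimately show "e \<in> span ?B"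
      using comb[of i l] il j e span_mono[of "{?a i, ?a l}" ?B]
      by (cases "i = 1") (auto intro: span_base)
  qed
  then have "span (pair_value A u ` Ypairs_below n (1, j)) \<subseteq> span ?B"
    by (intro span_minimal) auto
  moreover have "?B = ?a ` {2..m + 1} - {?a j}"
    using inj j by (auto simp: inj_on_def)
  then have "?a j \<notin> span ?B"
    using ind j unfolding dependent_def by auto
  ultimately show "p \<in> pivots A u n"
    using p j assms(1) by (auto simp: pivots_def pair_value_def Ypairs_def)
qed

end

lemma extend_to_bij_betw:
  assumes "finite S" "card S = n" "inj_on g {1..k}" "g ` {1..k} \<subseteq> S" "k \<le> n"
  obtains u where "\<And>i. i \<in> {1..k} \<Longrightarrow> u i = g i" "bij_betw u {1..n} S"
proof -
  let ?S' = "S - g ` {1..k}"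
  have "card ?S' = n - k"
    using card_Diff_subset[OF finite_imageI assms(4)] card_image[OF assms(3)] assms(2) by simp
  then obtain f where f: "bij_betw f {k + 1..n} ?S'"
    using finite_same_card_bij[of "{k + 1..n}" ?S'] assms(1) by auto
  define u where "u i = (if i \<le> k then g i else f i)" for i
  have "bij_betw u {1..k} (g ` {1..k})"
    using inj_on_imp_bij_betw[OF assms(3)] by (subst bij_betw_cong[of _ u g]) (auto simp: u_def)
  moreover have "bij_betw u {k + 1..n} ?S'"
    using f by (subst bij_betw_cong[of _ u f]) (auto simp: u_def)
  ultimately have "bij_betw u ({1..k} \<union> {k + 1..n}) (g ` {1..k} \<union> ?S')"
    by (rule bij_betw_combine) auto
  moreover have "{1..k} \<union> {k + 1..n} = {1..n}" "g ` {1..k} \<union> ?S' = S"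
    using assms(4,5) by auto
  ultimately have "bij_betw u {1..n} S"
    by simp
  then show ?thesis
    by (intro that) (simp_all add: u_def)
qed

lemma exists_enumeration_starting_with:
  assumes "finite S" "card S = n" "x \<in> S" "W \<subseteq> S - {x}" "card W = m" "m + 1 \<le> n"
  obtains u where "bij_betw u {1..n} S" "u 1 = x" "bij_betw u {2..m + 1} W"
    "\<And>k. k \<in> {m + 2..n} \<Longrightarrow> u k \<notin> insert x W"
proof -
  have "finite W"
    using assms(1,4) finite_subset by blast
  then obtain w where w: "bij_betw w {2..m + 1} W"
    using finite_same_card_bij[of "{2..m + 1}" W] assms(5) by auto
  define g where "g i = (if i = 1 then x else w i)" for i
  have g_W: "bij_betw g {2..m + 1} W"
    using w by (subst bij_betw_cong[of _ g w]) (auto simp: g_def)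
  then have "bij_betw g ({1} \<union> {2..m + 1}) ({x} \<union> W)"
    using assms(4) by (intro bij_betw_combine) (auto simp: g_def bij_betw_def)
  moreover have "{1} \<union> {2..m + 1} = {1..m + 1}"
    by auto
  ultimately have g: "bij_betw g {1..m + 1} (insert x W)"
    by simp
  obtain u where u: "\<And>i. i \<in> {1..m + 1} \<Longrightarrow> u i = g i" "bij_betw u {1..n} S"
    using extend_to_bij_betw[OF assms(1,2), of g "m + 1"] g assms(3,4,6)
    by (auto simp: bij_betw_def)
  have "bij_betw u {2..m + 1} W"
    using g_W u(1) by (subst bij_betw_cong[of _ u g]) auto
  moreover have "u ` {1..m + 1} = g ` {1..m + 1}"
    using u(1) by (intro image_cong) auto
  then have "u ` {1..m + 1} = insert x W"
    using g by (simp add: bij_betw_def)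
  then have "u k \<notin> insert x W" if "k \<in> {m + 2..n}" for k
    using inj_on_image_mem_iff[of u "{1..n}" k "{1..m + 1}"] u(2) that by (auto simp: bij_betw_def)
  ultimately show ?thesis
    using that u(1,2) by (simp add: g_def)
qed

context vector_space_pair
begin

lemma independent_Un_kernel:
  assumes f: "Vector_Spaces.linear s1 s2 f"
    and T: "vs1.independent T" "\<And>t. t \<in> T \<Longrightarrow> f t = 0"
    and W: "vs2.independent (f ` W)" "inj_on f W"
  shows "vs1.independent (W \<union> T)"
  unfolding vs1.independent_explicit_module
proof (intro allI impI)
  fix t c v
  assume t: "finite t" "t \<subseteq> W \<union> T" and sum0: "(\<Sum>v\<in>t. c v *a v) = 0" and v: "v \<in> t"
  define tW where "tW = t \<inter> W"
  define tT where "tT = t - W"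
  have fin: "finite tW" "finite tT" and tT_T: "tT \<subseteq> T"
    using t by (auto simp: tW_def tT_def)
  have split: "(\<Sum>v\<in>tW. c v *a v) + (\<Sum>v\<in>tT. c v *a v) = 0"
    unfolding tW_def tT_def using sum.Int_Diff[OF t(1), of "\<lambda>v. c v *a v" W] sum0 by simp
  have "f (\<Sum>v\<in>tT. c v *a v) = (\<Sum>v\<in>tT. c v *b f v)"
    by (simp add: linear_sum[OF f] linear_scale[OF f])
  also have "\<dots> = 0"
    using tT_T T(2) by (intro sum.neutral) auto
  finally have "f (\<Sum>v\<in>tT. c v *a v) = 0" .
  then have sumW: "(\<Sum>v\<in>tW. c v *b f v) = 0"
    using arg_cong[OF split, of f]
    by (simp add: linear_add[OF f] linear_sum[OF f] linear_scale[OF f] linear_0[OF f])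
  have inj: "inj_on f tW"
    using W(2) by (rule inj_on_subset) (simp add: tW_def)
  define c' where "c' y = c (the_inv_into tW f y)" for y
  have "(\<Sum>y\<in>f ` tW. c' y *b y) = (\<Sum>v\<in>tW. c v *b f v)"
    by (auto simp: sum.reindex[OF inj] c'_def the_inv_into_f_f[OF inj] intro!: sum.cong)
  then have "(\<Sum>y\<in>f ` tW. c' y *b y) = 0"
    using sumW by simp
  then have "c' (f w) = 0" if "w \<in> tW" for w
    using that by (intro vs2.independentD[OF W(1) finite_imageI[OF fin(1)]]) (auto simp: tW_def)
  then have cW: "c w = 0" if "w \<in> tW" for w
    using that inj by (simp add: the_inv_into_f_f c'_def)
  then have "(\<Sum>v\<in>tT. c v *a v) = 0"
    using split by simp
  then have "c w = 0" if "w \<in> tT" for w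
    using vs1.independentD[OF T(1) fin(2) tT_T] that by blast
  then show "c v = 0"
    using cW v by (auto simp: tW_def tT_def)
qed

lemma span_Un_kernel:
  assumes f: "Vector_Spaces.linear s1 s2 f"
    and W: "vs2.span (f ` W) = UNIV" and K: "\<And>k. f k = 0 \<Longrightarrow> k \<in> vs1.span K"
  shows "vs1.span (W \<union> K) = UNIV"
proof -
  have "y \<in> vs1.span (W \<union> K)" for y
  proof -
    obtain y' where y': "y' \<in> vs1.span W" "f y' = f y"
      using W linear_span_image[OF f] by (metis UNIV_I imageE)
    then have "y - y' \<in> vs1.span K"
      by (intro K) (simp add: linear_diff[OF f])
    then have "y - y' \<in> vs1.span (W \<union> K)" "y' \<in> vs1.span (W \<union> K)"
      using y'(1) vs1.span_mono[of K "W \<union> K"] vs1.span_mono[of W "W \<union> K"] by auto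
    then show ?thesis
      using vs1.span_add by fastforce
  qed
  then show ?thesis
    by blast
qed

lemma proportional_transfer:
  assumes f: "Vector_Spaces.linear s1 s2 f" and g: "Vector_Spaces.linear s1 s2 g"
    and ind: "vs2.independent2 (f z) (f p)" and p: "g p = c *b f p"
    and pointwise: "\<And>z. f z \<noteq> 0 \<Longrightarrow> \<exists>e. g z = e *b f z"
  shows "g z = c *b f z"
proof -
  obtain d where d: "g z = d *b f z"
    using pointwise vs2.independent2_nonzero[OF ind] by blast
  have "f (z + p) \<noteq> 0"
  proof
    assume "f (z + p) = 0"
    then have "1 *b f z + 1 *b f p = 0"
      by (simp add: linear_add[OF f])
    then show False
      using ind unfolding vs2.independent2_def by (metis one_neq_zero)
  qed
  then obtain e where e: "g (z + p) = e *b f (z + p)"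
    using pointwise by blast
  have "(d - e) *b f z + (c - e) *b f p = 0"
    using e d p by (simp add: linear_add[OF f] linear_add[OF g] vs2.scale_left_diff_distrib
        vs2.scale_right_distrib algebra_simps)
  then have "d - e = 0" "c - e = 0"
    using ind unfolding vs2.independent2_def by blast+
  then show ?thesis
    using d by simp
qed

lemma pointwise_proportional_imp_proportional:
  assumes f: "Vector_Spaces.linear s1 s2 f" and g: "Vector_Spaces.linear s1 s2 g"
    and ind: "vs2.independent2 (f z0) (f z1)"
    and pointwise: "\<And>z. f z \<noteq> 0 \<Longrightarrow> \<exists>e. g z = e *b f z"
  shows "\<exists>c. \<forall>z. g z = c *b f z"
proof -
  obtain c where c0: "g z0 = c *b f z0"
    using pointwise vs2.independent2_nonzero[OF ind] by blast
  have c1: "g z1 = c *b f z1"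
    using proportional_transfer[OF f g vs2.independent2_commute[OF ind] c0 pointwise] .
  have "g z = c *b f z" for z
  proof (cases "vs2.independent2 (f z) (f z0) \<or> vs2.independent2 (f z) (f z1)")
    case True
    then show ?thesis
      using proportional_transfer[OF f g _ c0 pointwise]
        proportional_transfer[OF f g _ c1 pointwise] by blast
  next
    case False
    then have fz: "f z = 0"
      using vs2.zero_if_dependent2_on_both[OF ind] by blast
    then have "vs2.independent2 (f (z + z1)) (f z0)"
      using vs2.independent2_commute[OF ind] by (simp add: linear_add[OF f])
    then have "g (z + z1) = c *b f (z + z1)"
      using proportional_transfer[OF f g _ c0 pointwise] by blast
    then show ?thesis
      using c1 fz by (simp add: linear_add[OF f] linear_add[OF g])
  qed
  then show ?thesis
    by blast
qed

lemma exists_preimage_of_basis: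
  assumes surj: "range f = UNIV"
  obtains W where "inj_on f W" "vs2.independent (f ` W)" "vs2.span (f ` W) = UNIV"
proof -
  obtain B where B: "B \<subseteq> UNIV" "vs2.independent B" "UNIV \<subseteq> vs2.span B" "card B = vs2.dim UNIV"
    by (rule vs2.basis_exists)
  have f_inv: "f (inv f b) = b" for b
    by (simp add: f_inv_into_f surj)
  have "inj_on f (inv f ` B)"
    by (auto simp: inj_on_def f_inv)
  moreover have "f ` inv f ` B = B"
    by (simp add: image_image f_inv)
  ultimately show ?thesis
    using that[of "inv f ` B"] B(2,3) by auto
qed

end

section \<open>Alternating bilinear maps\<close>

locale alternating_bilinear = vector_space_pair sU sV
  for sU :: "'f::field \<Rightarrow> 'u::ab_group_add \<Rightarrow> 'u" and sV :: "'f \<Rightarrow> 'v::ab_group_add \<Rightarrow> 'v" +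
  fixes A :: "'u \<Rightarrow> 'u \<Rightarrow> 'v"
  assumes linear_right: "\<And>x. Vector_Spaces.linear sU sV (A x)"
    and linear_left: "\<And>y. Vector_Spaces.linear sU sV (\<lambda>x. A x y)"
    and alternating: "\<And>x. A x x = 0"
begin

lemma add_right: "A x (y + z) = A x y + A x z"
  by (rule linear_add[OF linear_right])

lemma add_left: "A (x + y) z = A x z + A y z"
  by (rule linear_add[OF linear_left])

lemma diff_right: "A x (y - z) = A x y - A x z"
  by (rule linear_diff[OF linear_right])

lemma diff_left: "A (x - y) z = A x z - A y z"
  by (rule linear_diff[OF linear_left])

lemma scale_right: "A x (sU c y) = sV c (A x y)"
  by (rule linear_scale[OF linear_right])

lemma scale_left: "A (sU c x) y = sV c (A x y)"
  by (rule linear_scale[OF linear_left])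

lemma zero_right [simp]: "A x 0 = 0"
  by (rule linear_0[OF linear_right])

lemma zero_left [simp]: "A 0 y = 0"
  by (rule linear_0[OF linear_left])

lemma skew_symmetric: "A y x = - A x y"
proof -
  have "A x x + A y x + (A x y + A y y) = 0"
    using alternating[of "x + y"] by (simp only: add_left add_right)
  then show ?thesis
    by (simp add: alternating eq_neg_iff_add_eq_0 add.commute)
qed

lemma subspace_range_right: "vs2.subspace (range (A x))"
  by (rule linear_subspace_image[OF linear_right vs1.subspace_UNIV])

definition radical :: "'u set" where
  "radical = {r. \<forall>z. A r z = 0}"

lemma subspace_radical: "vs1.subspace radical"
  by (rule vs1.subspaceI) (auto simp: radical_def add_left scale_left)

lemma image_in_line_if_slices_rank_one:
  assumes line: "\<And>p q r. A p r \<noteq> 0 \<Longrightarrow> A p q \<in> vs2.span {A p r}"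
    and a0: "A x0 y0 \<noteq> 0"
  shows "A p q \<in> vs2.span {A x0 y0}"
proof -
  let ?a = "A x0 y0"
  have span_a: "vs2.span {b} \<subseteq> vs2.span {?a}" if "b \<in> vs2.span {?a}" for b
    using that by (intro vs2.span_minimal) auto
  have x0: "A x0 q \<in> vs2.span {?a}" for q
    using line[of x0 y0 q] a0 by simp
  have y0: "A y0 q \<in> vs2.span {?a}" for q
  proof -
    have "A y0 x0 \<in> vs2.span {?a}"
      by (simp add: skew_symmetric[of y0 x0] vs2.span_neg vs2.span_base)
    then show ?thesis
      using line[of y0 x0 q] a0 span_a skew_symmetric[of y0 x0] by auto
  qed
  consider "A p x0 \<noteq> 0" | "A p y0 \<noteq> 0" | "A p x0 = 0" "A p y0 = 0"
    by blast
  then show ?thesis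
  proof cases
    case 1
    moreover have "A p x0 \<in> vs2.span {?a}"
      using x0[of p] skew_symmetric[of p x0] vs2.span_neg by fastforce
    ultimately show ?thesis
      using line span_a by blast
  next
    case 2
    moreover have "A p y0 \<in> vs2.span {?a}"
      using y0[of p] skew_symmetric[of p y0] vs2.span_neg by fastforce
    ultimately show ?thesis
      using line span_a by blast
  next
    case 3
    then have "A (p + x0) y0 = ?a"
      by (simp add: add_left)
    then have "A (p + x0) q \<in> vs2.span {?a}"
      using line[of "p + x0" y0 q] a0 by simp
    then show ?thesis
      using x0[of q] vs2.span_diff[of "A (p + x0) q" "{?a}" "A x0 q"] by (simp add: add_left)
  qed
qed

lemma exists_independent2_slice:
  assumes spans: "vs2.span {A x y | x y. True} = UNIV"
    and not_line: "\<And>a. vs2.span {a} \<noteq> UNIV"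
  shows "\<exists>x y z. vs2.independent2 (A x y) (A x z)"
proof (rule ccontr)
  assume "\<not> ?thesis"
  then have line: "A p q \<in> vs2.span {A p r}" if "A p r \<noteq> 0" for p q r
    using vs2.dependent2_multiple[OF _ that] by (metis vs2.span_base vs2.span_scale singletonI)
  have "\<exists>x0 y0. A x0 y0 \<noteq> 0"
  proof (rule ccontr)
    assume "\<not> ?thesis"
    then have "{A x y | x y. True} = {0}"
      by auto
    then show False
      using spans not_line[of 0] by simp
  qed
  then obtain x0 y0 where a0: "A x0 y0 \<noteq> 0"
    by blast
  have "vs2.span {A x y | x y. True} \<subseteq> vs2.span {A x0 y0}"
    using image_in_line_if_slices_rank_one[OF line a0] by (intro vs2.span_minimal) auto
  then show False
    using spans not_line[of "A x0 y0"] by auto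
qed

lemma radical_left: "r \<in> radical \<Longrightarrow> A r z = 0"
  by (simp add: radical_def)

lemma radical_right: "r \<in> radical \<Longrightarrow> A z r = 0"
  by (simp add: radical_def skew_symmetric[of z r])

lemma independent_if_triangle:
  assumes tri: "vs2.independent3 (A x y) (A x z) (A y z)"
  shows "vs1.independent {x, y, z}" "x \<noteq> y" "x \<noteq> z" "y \<noteq> z"
proof -
  have xy_xz: "vs2.independent2 (A x y) (A x z)"
    using vs2.independent3_imp_independent2[OF tri] .
  have yz_xy: "vs2.independent2 (A y z) (A x y)"
    using vs2.independent3_imp_independent2[OF
        vs2.independent3_swap12[OF vs2.independent3_swap23[OF tri]]] .
  have nonzero: "A x y \<noteq> 0" "A x z \<noteq> 0" "A y z \<noteq> 0"
    using vs2.independent2_nonzero[OF xy_xz] vs2.independent2_nonzero[OF yz_xy]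
      vs2.independent2_nonzero[OF vs2.independent2_commute[OF xy_xz]] by blast+
  then show distinct: "x \<noteq> y" "x \<noteq> z" "y \<noteq> z"
    by (auto simp: alternating)
  show "vs1.independent {x, y, z}"
  proof
    assume "vs1.dependent {x, y, z}"
    then obtain c where c: "\<exists>v\<in>{x, y, z}. c v \<noteq> 0" "(\<Sum>v\<in>{x, y, z}. sU (c v) v) = 0"
      using vs1.dependent_finite[of "{x, y, z}"] by auto
    have sum0: "sU (c x) x + sU (c y) y + sU (c z) z = 0"
      using c(2) distinct by (simp add: add.assoc)
    have "A x (sU (c x) x + sU (c y) y + sU (c z) z) = sV (c y) (A x y) + sV (c z) (A x z)"
      by (simp add: add_right scale_right alternating)
    then have "sV (c y) (A x y) + sV (c z) (A x z) + sV 0 (A y z) = 0"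
      using sum0 by simp
    then have "c y = 0" "c z = 0"
      using tri unfolding vs2.independent3_def by blast+
    moreover have "x \<noteq> 0"
      using nonzero(1) by auto
    then have "c x = 0"
      using sum0 calculation by simp
    ultimately show False
      using c(1) by auto
  qed
qed

lemma exists_basis_not_tree_height_one:
  assumes dim: "vs1.dim UNIV = n" "3 \<le> n"
    and tri: "vs2.independent3 (A x y) (A x z) (A y z)"
  shows "\<exists>u. vs1.ordered_basis n u \<and> \<not> tree_height_one n (greedy_B sV A u n)"
proof -
  note xyz = independent_if_triangle[OF tri]
  obtain B where B: "{x, y, z} \<subseteq> B" "vs1.independent B" "UNIV \<subseteq> vs1.span B"
    by (rule vs1.maximal_independent_subset_extend[OF subset_UNIV xyz(1)])
  then have B_span: "vs1.span B = UNIV"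
    by auto
  have "finite B" "card B = n"
    using vs1.finite_basis_if_dim_pos[OF B(2) B_span] dim by auto
  define g where "g i = (if i = 1 then x else if i = 2 then y else z)" for i :: nat
  have "inj_on g {1..3}" "g ` {1..3} \<subseteq> B"
    using xyz(2-4) B(1) by (auto simp: g_def inj_on_def)
  then obtain u where u: "\<And>i. i \<in> {1..3} \<Longrightarrow> u i = g i" "bij_betw u {1..n} B"
    using extend_to_bij_betw[OF \<open>finite B\<close> \<open>card B = n\<close> _ _ dim(2)] by blast
  have "u 1 = x" "u 2 = y" "u 3 = z"
    using u(1) by (auto simp: g_def)
  then have "{(1, 2), (1, 3), (2, 3)} \<subseteq> greedy_B sV A u n"
    using vs2.triangle_pivots[of n A u] dim(2) tri by (simp add: vs2.greedy_B_eq_pivots)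
  then have "\<not> tree_height_one n (greedy_B sV A u n)"
    by (rule not_tree_height_one_if_triangle) simp_all
  then show ?thesis
    using vs1.ordered_basis_if_bij_betw[OF u(2) B(2) B_span] by blast
qed

end

section \<open>Triangle-free alternating bilinear maps\<close>

locale triangle_free_alternating = alternating_bilinear +
  assumes triangle_free: "\<And>x y z. \<not> vs2.independent3 (A x y) (A x z) (A y z)"
begin

lemma triangle_free_combination:
  assumes "vs2.independent2 (A x p) (A x q)"
  shows "\<exists>s t. A p q = sV s (A x p) + sV t (A x q)"
  using vs2.dependent3_combination[OF assms triangle_free] .

lemma in_range_right_if_independent2:
  assumes "vs2.independent2 (A x p) (A x q)"
  shows "A p q \<in> range (A x)"
proof -
  obtain s t where "A p q = sV s (A x p) + sV t (A x q)"
    using triangle_free_combination[OF assms] by blast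
  then have "A p q = A x (sU s p + sU t q)"
    by (simp add: add_right scale_right)
  then show ?thesis
    by blast
qed

lemma range_right_diff: "a \<in> range (A x) \<Longrightarrow> b \<in> range (A x) \<Longrightarrow> a - b \<in> range (A x)"
  by (rule vs2.subspace_diff[OF subspace_range_right])

lemma range_right_contains_column:
  assumes yz: "vs2.independent2 (A x y) (A x z)"
  shows "A p y \<in> range (A x)"
proof (cases "vs2.independent2 (A x p) (A x y)")
  case True
  then show ?thesis
    by (rule in_range_right_if_independent2)
next
  case False
  obtain k where k: "A x p = sV k (A x y)"
    using vs2.dependent2_multiple[OF False vs2.independent2_nonzero[OF yz]] by blast
  have "vs2.independent2 (A x (p + z)) (A x y)"
    using vs2.independent2_add_multiple[OF yz, of k] by (simp add: add_right k)
  then have "A (p + z) y \<in> range (A x)"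
    by (rule in_range_right_if_independent2)
  moreover have "A z y \<in> range (A x)"
    using in_range_right_if_independent2[OF vs2.independent2_commute[OF yz]] .
  ultimately have "A (p + z) y - A z y \<in> range (A x)"
    by (rule range_right_diff)
  then show ?thesis
    by (simp add: add_left)
qed

lemma range_right_contains_row:
  assumes yz: "vs2.independent2 (A x y) (A x z)" and "A x p \<noteq> 0"
  shows "A p q \<in> range (A x)"
proof (cases "vs2.independent2 (A x p) (A x q)")
  case True
  then show ?thesis
    by (rule in_range_right_if_independent2)
next
  case False
  obtain c where c: "A x q = sV c (A x p)"
    using vs2.dependent2_multiple[OF _ assms(2)] False vs2.independent2_commute by blast
  define k where "k = q - sU c p"
  have k: "A x k = 0" "A p q = A p k"
    by (simp_all add: k_def diff_right scale_right c alternating)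
  obtain w where w: "w \<in> {y, z}" "vs2.independent2 (A x p) (A x w)"
  proof (cases "vs2.independent2 (A x p) (A x y)")
    case False
    then obtain e where e: "A x p = sV e (A x y)"
      using vs2.dependent2_multiple[OF False] vs2.independent2_nonzero[OF yz] by blast
    then have "e \<noteq> 0"
      using assms(2) by auto
    then show ?thesis
      using that[of z] vs2.independent2_scale[OF yz] e by simp
  qed (use that[of y] in simp)
  then have "A p (k + w) \<in> range (A x)"
    by (intro in_range_right_if_independent2) (simp add: add_right k(1))
  moreover have "A p w \<in> range (A x)"
    using w(1) range_right_contains_column[OF yz] range_right_contains_column[OF
        vs2.independent2_commute[OF yz]] by blast
  ultimately have "A p (k + w) - A p w \<in> range (A x)"
    by (rule range_right_diff)
  then show ?thesis
    by (simp add: add_right k(2))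
qed

lemma range_right_contains_image:
  assumes yz: "vs2.independent2 (A x y) (A x z)"
  shows "A p q \<in> range (A x)"
proof -
  consider "A x p \<noteq> 0" | "A x q \<noteq> 0" | "A x p = 0" "A x q = 0"
    by blast
  then show ?thesis
  proof cases
    case 1
    then show ?thesis
      by (rule range_right_contains_row[OF yz])
  next
    case 2
    then have "A q p \<in> range (A x)"
      by (rule range_right_contains_row[OF yz])
    then show ?thesis
      using vs2.subspace_neg[OF subspace_range_right] skew_symmetric[of p q] by fastforce
  next
    case 3
    then have "A (p + y) (q + z) \<in> range (A x)"
      using yz by (intro in_range_right_if_independent2) (simp add: add_right)
    moreover have "A p z \<in> range (A x)" "A q y \<in> range (A x)" "A y z \<in> range (A x)"
      using range_right_contains_column[OF yz] range_right_contains_column[OF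
          vs2.independent2_commute[OF yz]] by blast+
    ultimately have "A (p + y) (q + z) - A p z + A q y - A y z \<in> range (A x)"
      by (intro range_right_diff vs2.subspace_add[OF subspace_range_right])
    moreover have "A (p + y) (q + z) - A p z + A q y - A y z = A p q"
      by (simp add: add_left add_right skew_symmetric[of y q])
    ultimately show ?thesis
      by simp
  qed
qed

lemma exists_surjective_slice:
  assumes "vs2.span {A x y | x y. True} = UNIV" and "\<And>a. vs2.span {a} \<noteq> UNIV"
  obtains x y z where "range (A x) = UNIV" "vs2.independent2 (A x y) (A x z)"
proof -
  obtain x y z where yz: "vs2.independent2 (A x y) (A x z)"
    using exists_independent2_slice[OF assms] by blast
  have "vs2.span {A x y | x y. True} \<subseteq> range (A x)"
    using range_right_contains_image[OF yz]
    by (intro vs2.span_minimal[OF _ subspace_range_right]) auto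
  then have "range (A x) = UNIV"
    using assms(1) by auto
  then show ?thesis
    using that yz by blast
qed

lemma kernel_combination:
  assumes zw: "vs2.independent2 (A x z) (A x w)" and k: "A x k = 0"
  shows "\<exists>s t. A z k = sV s (A x z) + sV t (A x w)"
proof -
  obtain s t where st: "A z (w + k) = sV s (A x z) + sV t (A x w)"
    using triangle_free_combination[of x z "w + k"] zw k by (auto simp: add_right)
  obtain s' t' where st': "A z w = sV s' (A x z) + sV t' (A x w)"
    using triangle_free_combination[OF zw] by blast
  have "A z k = A z (w + k) - A z w"
    by (simp add: add_right)
  also have "\<dots> = sV (s - s') (A x z) + sV (t - t') (A x w)"
    unfolding st st' by (simp add: vs2.scale_left_diff_distrib algebra_simps)
  finally show ?thesis
    by blast
qed

lemma kernel_pointwise_proportional: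
  assumes dimV: "3 \<le> vs2.dim UNIV" and surj: "range (A x) = UNIV"
    and k: "A x k = 0" and nz: "A x z \<noteq> 0"
  shows "\<exists>e. A k z = sV e (A x z)"
proof -
  obtain b c where bc: "vs2.independent3 (A x z) b c"
    using vs2.exists_independent3[OF dimV nz] by blast
  obtain w w' where w: "A x w = b" "A x w' = c"
    using surj by (metis UNIV_I imageE)
  obtain s1 t1 where e1: "A z k = sV s1 (A x z) + sV t1 b"
    using kernel_combination[OF _ k, of z w] vs2.independent3_imp_independent2[OF bc] w by auto
  obtain s2 t2 where e2: "A z k = sV s2 (A x z) + sV t2 c"
    using kernel_combination[OF _ k, of z w'] w
      vs2.independent3_imp_independent2[OF vs2.independent3_swap23[OF bc]] by auto
  have "sV (s1 - s2) (A x z) + sV t1 b + sV (- t2) c = 0"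
    using e1 e2 by (simp add: vs2.scale_left_diff_distrib algebra_simps)
  then have "t1 = 0"
    using bc unfolding vs2.independent3_def by blast
  then have "A k z = sV (- s1) (A x z)"
    using e1 skew_symmetric[of k z] by simp
  then show ?thesis ..
qed

lemma kernel_subset_span_radical:
  assumes dimV: "3 \<le> vs2.dim UNIV" and surj: "range (A x) = UNIV"
    and yz: "vs2.independent2 (A x y) (A x z)" and k: "A x k = 0"
  shows "k \<in> vs1.span (insert x radical)"
proof -
  obtain c where c: "\<forall>z. A k z = sV c (A x z)"
    using pointwise_proportional_imp_proportional[OF linear_right linear_right yz
        kernel_pointwise_proportional[OF dimV surj k]] by blast
  then have "k - sU c x \<in> radical"
    by (simp add: radical_def diff_left scale_left)
  then have "sU c x + (k - sU c x) \<in> vs1.span (insert x radical)"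
    by (intro vs1.span_add vs1.span_scale vs1.span_base) auto
  then show ?thesis
    by simp
qed

lemma combination_in_span:
  assumes "vs2.independent (A x ` W)" "inj_on (A x) W" "p \<in> W" "q \<in> W" "p \<noteq> q"
  shows "A p q \<in> vs2.span {A x p, A x q}"
proof -
  have "A x p \<noteq> A x q"
    using assms(2-5) by (auto dest: inj_onD)
  then have "vs2.independent2 (A x p) (A x q)"
    using vs2.independent_imp_independent2[OF assms(1)] assms(3,4) by blast
  then obtain s t where "A p q = sV s (A x p) + sV t (A x q)"
    using triangle_free_combination by blast
  then show ?thesis
    by (simp add: vs2.span_add vs2.span_scale vs2.span_base)
qed

lemma exists_slice_decomposition:
  assumes dimV: "3 \<le> vs2.dim UNIV"
    and spans: "vs2.span {A x y | x y. True} = UNIV"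
  obtains x W R where "inj_on (A x) W" "vs2.independent (A x ` W)" "vs2.span (A x ` W) = UNIV"
    "x \<notin> W" "R \<subseteq> radical" "vs1.independent (W \<union> insert x R)" "vs1.span (W \<union> insert x R) = UNIV"
proof -
  have not_line: "vs2.span {a} \<noteq> UNIV" for a
    using vs2.span_singleton_neq_UNIV dimV by simp
  obtain x y z where surj: "range (A x) = UNIV" and yz: "vs2.independent2 (A x y) (A x z)"
    using exists_surjective_slice[OF spans not_line] by blast
  obtain W where W: "inj_on (A x) W" "vs2.independent (A x ` W)" "vs2.span (A x ` W) = UNIV"
    using exists_preimage_of_basis[OF surj] by blast
  have "x \<notin> W"
  proof
    assume "x \<in> W"
    then have "A x x \<in> A x ` W"
      by (rule imageI)
    then show False
      using W(2) vs2.dependent_zero alternating[of x] by simp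
  qed
  obtain R where R: "R \<subseteq> radical" "vs1.independent R" "radical \<subseteq> vs1.span R"
    by (rule vs1.basis_exists)
  have "x \<notin> radical"
    using radical_left vs2.independent2_nonzero[OF yz] by blast
  then have "x \<notin> vs1.span R"
    using vs1.span_minimal[OF R(1) subspace_radical] by blast
  then have xR: "vs1.independent (insert x R)"
    using vs1.independent_insertI R(2) by blast
  have "A x t = 0" if "t \<in> insert x R" for t
    using that R(1) alternating radical_right by auto
  then have "vs1.independent (W \<union> insert x R)"
    using independent_Un_kernel[OF linear_right xR] W(1,2) by blast
  moreover have "vs1.span (W \<union> insert x R) = UNIV"
  proof (rule span_Un_kernel[OF linear_right W(3)])
    have "vs1.span (insert x radical) \<subseteq> vs1.span (insert x R)"
      using R(3) vs1.span_mono[of R "insert x R"]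
      by (intro vs1.span_minimal) (auto intro: vs1.span_base)
    then show "k \<in> vs1.span (insert x R)" if "A x k = 0" for k
      using kernel_subset_span_radical[OF dimV surj yz that] by blast
  qed
  ultimately show ?thesis
    using that[of x W R] W \<open>x \<notin> W\<close> R(1) by blast
qed

lemma greedy_B_star:
  assumes W: "inj_on (A x) W" "vs2.independent (A x ` W)" "vs2.span (A x ` W) = UNIV"
    and u: "u 1 = x" "bij_betw u {2..m + 1} W" and mn: "m + 1 \<le> n"
  shows "greedy_B sV A u n = {(1, k) | k. 2 \<le> k \<and> k \<le> m + 1}"
proof -
  let ?a = "\<lambda>k. A (u 1) (u k)"
  have "bij_betw ?a {2..m + 1} (A x ` W)"
    using bij_betw_trans[OF u(2) inj_on_imp_bij_betw[OF W(1)]] u(1) by (simp add: comp_def)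
  then have a: "inj_on ?a {2..m + 1}" "?a ` {2..m + 1} = A x ` W"
    by (simp_all add: bij_betw_def)
  have comb: "A (u i) (u j) \<in> vs2.span {A (u 1) (u i), A (u 1) (u j)}"
    if "2 \<le> i" "i < j" "j \<le> m + 1" for i j
  proof -
    have "u i \<noteq> u j"
      using inj_onD[OF bij_betw_imp_inj_on[OF u(2)], of i j] that by auto
    moreover have "u i \<in> W" "u j \<in> W"
      using bij_betw_apply[OF u(2)] that by auto
    ultimately show ?thesis
      using combination_in_span[OF W(2,1)] u(1) by simp
  qed
  have "vs2.pivots A u n \<subseteq> {(1, k) | k. 2 \<le> k \<and> k \<le> m + 1}"
    by (rule vs2.pivots_subset_star) (use a(2) W(3) comb in simp_all)
  moreover have "{(1, k) | k. 2 \<le> k \<and> k \<le> m + 1} \<subseteq> vs2.pivots A u n"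
    by (rule vs2.star_subset_pivots) (use a W(2) comb mn in simp_all)
  ultimately show "greedy_B sV A u n = {(1, k) | k. 2 \<le> k \<and> k \<le> m + 1}"
    by (simp add: vs2.greedy_B_eq_pivots)
qed

lemma exists_star_basis:
  assumes dim: "vs1.dim UNIV = n" "vs2.dim UNIV = m" "2 < m" "m + 1 < n"
    and spans: "vs2.span {A x y | x y. True} = UNIV"
  shows "\<exists>u. vs1.ordered_basis n u \<and>
           greedy_B sV A u n = {(1, k) | k. 2 \<le> k \<and> k \<le> m + 1} \<and>
           (\<forall>i. m + 2 \<le> i \<and> i \<le> n \<longrightarrow> A (u 1) (u i) = 0) \<and>
           (\<forall>i j. m + 1 < i \<and> i < j \<and> j \<le> n \<longrightarrow> A (u i) (u j) = 0) \<and>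
           (\<forall>i j. 2 \<le> i \<and> i \<le> m + 1 \<and> m + 1 < j \<and> j \<le> n \<longrightarrow>
              A (u i) (u j) \<in> vs2.span {A (u 1) (u i)})"
proof -
  have "3 \<le> vs2.dim UNIV"
    using dim(2,3) by simp
  then obtain x W R
    where W: "inj_on (A x) W" "vs2.independent (A x ` W)" "vs2.span (A x ` W) = UNIV" "x \<notin> W"
    and R: "R \<subseteq> radical"
    and S: "vs1.independent (W \<union> insert x R)" "vs1.span (W \<union> insert x R) = UNIV"
    by (rule exists_slice_decomposition[OF _ spans])
  have S_card: "finite (W \<union> insert x R)" "card (W \<union> insert x R) = n"
    using vs1.finite_basis_if_dim_pos[OF S] dim by auto
  have card_W: "card W = m"
    using vs2.finite_basis_if_dim_pos(2)[OF W(2,3)] dim(2,3) card_image[OF W(1)] by simp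
  have x_W: "x \<in> W \<union> insert x R" "W \<subseteq> W \<union> insert x R - {x}" "m + 1 \<le> n"
    using W(4) dim(4) by auto
  obtain u where u: "bij_betw u {1..n} (W \<union> insert x R)" "u 1 = x" "bij_betw u {2..m + 1} W"
      and rest: "\<And>k. k \<in> {m + 2..n} \<Longrightarrow> u k \<notin> insert x W"
    using exists_enumeration_starting_with[OF S_card x_W(1,2) card_W x_W(3)] by blast
  have rad: "u k \<in> radical" if "m + 2 \<le> k" "k \<le> n" for k
    using u(1) rest[of k] that R by (auto simp: bij_betw_def)
  have "greedy_B sV A u n = {(1, k) | k. 2 \<le> k \<and> k \<le> m + 1}"
    using greedy_B_star[OF W(1-3) u(2,3)] dim(4) by simp
  moreover have "vs1.ordered_basis n u"
    using vs1.ordered_basis_if_bij_betw[OF u(1) S] .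
  ultimately show ?thesis
    using rad radical_left radical_right vs2.span_zero by auto
qed

end

theorem proposition2p3:
  fixes sU :: "'f::field \<Rightarrow> 'u::ab_group_add \<Rightarrow> 'u"
    and sV :: "'f \<Rightarrow> 'v::ab_group_add \<Rightarrow> 'v"
    and A :: "'u \<Rightarrow> 'u \<Rightarrow> 'v"
    and n m :: nat
  assumes vsU: "vector_space sU" and vsV: "vector_space sV"
    and finU: "\<exists>S. finite S \<and> module.span sU S = UNIV"
    and finV: "\<exists>S. finite S \<and> module.span sV S = UNIV"
    and dimU: "vector_space.dim sU (UNIV :: 'u set) = n"
    and dimV: "vector_space.dim sV (UNIV :: 'v set) = m"
    and lin1: "\<forall>x. Vector_Spaces.linear sU sV (\<lambda>y. A x y)"
    and lin2: "\<forall>y. Vector_Spaces.linear sU sV (\<lambda>x. A x y)"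
    and alt: "\<forall>x. A x x = 0"
    and spans: "module.span sV {A x y | x y. True} = UNIV"
    and m_gt: "m > 2" and n_gt: "n > m + 1"
  shows "\<exists>u :: nat \<Rightarrow> 'u.
           inj_on u {1..n} \<and>
           \<not> module.dependent sU (u ` {1..n}) \<and>
           module.span sU (u ` {1..n}) = UNIV \<and>
           (\<not> tree_height_one n (greedy_B sV A u n) \<or>
            (greedy_B sV A u n = {(1, k) | k. 2 \<le> k \<and> k \<le> m + 1} \<and>
             (\<forall>i. m + 2 \<le> i \<and> i \<le> n \<longrightarrow> A (u 1) (u i) = 0) \<and>
             (\<forall>i j. m + 1 < i \<and> i < j \<and> j \<le> n \<longrightarrow> A (u i) (u j) = 0) \<and>
             (\<forall>i j. 2 \<le> i \<and> i \<le> m + 1 \<and> m + 1 < j \<and> j \<le> n \<longrightarrow>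
                A (u i) (u j) \<in> module.span sV {A (u 1) (u i)})))"
proof -
  interpret alternating_bilinear sU sV A
    using vsU vsV lin1 lin2 alt
    by (simp add: alternating_bilinear_def alternating_bilinear_axioms_def vector_space_pair_def)
  show ?thesis
  proof (cases "\<exists>x y z. vs2.independent3 (A x y) (A x z) (A y z)")
    case True
    then obtain x y z where "vs2.independent3 (A x y) (A x z) (A y z)"
      by blast
    moreover have "3 \<le> n"
      using m_gt n_gt by simp
    ultimately obtain u where "vs1.ordered_basis n u" "\<not> tree_height_one n (greedy_B sV A u n)"
      using exists_basis_not_tree_height_one[OF dimU] by blast
    then show ?thesis
      unfolding vs1.ordered_basis_def by blast
  next
    case False
    then interpret triangle_free_alternating sU sV A
      by unfold_locales blast
    show ?thesis
      using exists_star_basis[OF dimU dimV m_gt n_gt spans]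
      unfolding vs1.ordered_basis_def by blast
  qed
qed

end
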